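(* Let $a\in C^1(\mathbb{R})$ be real valued. For $C>0$ with $a(C^2)>0$ put $\omega=\omega(C)=a(C^2)^2/4$ and $\psi_\omega(x)=Ce^{-\sqrt\omega|x|}$, and write $a=a(C^2)$, $a'=a'(C^2)$. Consider $\int|\psi_\omega|^2dx$ as a function of $\omega$ along this family (locally, near a point with $a'\neq0$, where $C\mapsto\omega(C)$ is locally invertible). Then $$ \partial_\omega\int|\psi_\omega(x)|^2dx<0\quad\text{if } a'\in(-\infty,0)\cup(a/C^2,+\infty), $$ and $$ \partial_\omega\int|\psi_\omega(x)|^2dx>0\quad\text{if } 0<a'<a/C^2. $$ *)

theory Defs
  imports "HOL-Analysis.Analysis"
begin

definition psi :: "real \<Rightarrow> real \<Rightarrow> real \<Rightarrow> real" where
  "psi C \<omega> x = C * exp (- sqrt \<omega> * \<bar>x\<bar>)"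

definition omega :: "(real \<Rightarrow> real) \<Rightarrow> real \<Rightarrow> real" where
  "omega a C = (a (C\<^sup>2))\<^sup>2 / 4"

end

theory Submission
  imports Defs
begin

text \<open>The mass of the profile is explicit: \<open>\<integral>|\<psi>\<^sub>\<omega>|\<^sup>2 = C\<^sup>2/\<surd>\<omega>\<close>. Along the family, \<open>C\<close> is the
  local inverse of \<open>\<omega>(C) = a(C\<^sup>2)\<^sup>2/4\<close>, whose derivative \<open>a(C\<^sup>2) a'(C\<^sup>2) C\<close> does not vanish near
  the given point. Hence by the one-dimensional inverse function theorem and the quotient rule
  the mass is differentiable in \<open>\<omega>\<close> with derivative \<open>4 (a - C\<^sup>2a') / (a\<^sup>3a')\<close>, whose sign is
  that of \<open>a' (a/C\<^sup>2 - a')\<close>.\<close>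

lemma has_integral_even_real:
  fixes f :: "real \<Rightarrow> real"
  assumes even: "\<And>x. f (- x) = f x"
    and f: "f absolutely_integrable_on {0..}"
  shows "(f has_integral 2 * integral {0..} f) UNIV"
proof -
  have reflect: "uminus ` {..0::real} \<subseteq> {0..}" "uminus ` {0::real..} \<subseteq> {..0}"
    by auto
  have "f absolutely_integrable_on {..0} \<and> integral {..0} f = integral {0..} f"
    using has_absolute_integral_reflect_real[OF reflect, of f "integral {0..} f"] f even
    by simp
  then have left: "(f has_integral integral {0..} f) {..0}"
    using absolutely_integrable_on_def has_integral_integral by metis
  have right: "(f has_integral integral {0..} f) {0..}"
    using f absolutely_integrable_on_def has_integral_integral by blast
  have "{..0} \<inter> {0::real..} = {0}"
    by auto
  then have "negligible ({..0} \<inter> {0::real..})"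
    by simp
  from has_integral_Un[OF left right this]
  have "(f has_integral integral {0..} f + integral {0..} f) ({..0} \<union> {0..})" .
  moreover have "{..0} \<union> {0::real..} = UNIV"
    by auto
  ultimately show ?thesis
    unfolding mult_2 by simp
qed

lemma has_integral_exp_minus_abs:
  fixes k :: real
  assumes k: "k > 0"
  shows "((\<lambda>x. exp (- k * \<bar>x\<bar>)) has_integral 2 / k) UNIV"
proof -
  have "((\<lambda>x. exp (- k * x)) has_integral 1 / k) {0..}"
    using has_integral_exp_minus_to_infinity[OF k, of 0] by simp
  then have half: "((\<lambda>x. exp (- k * \<bar>x\<bar>)) has_integral 1 / k) {0..}"
    by (rule has_integral_eq[rotated]) simp
  have "(\<lambda>x. exp (- k * \<bar>x\<bar>)) absolutely_integrable_on {0..}"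
    by (rule nonnegative_absolutely_integrable_1[OF has_integral_integrable[OF half]]) simp
  from has_integral_even_real[OF _ this]
  have "((\<lambda>x. exp (- k * \<bar>x\<bar>)) has_integral 2 * (1 / k)) UNIV"
    unfolding integral_unique[OF half] by simp
  then show ?thesis
    by simp
qed

lemma integral_psi_squared:
  assumes "w > 0"
  shows "integral UNIV (\<lambda>x. \<bar>psi c w x\<bar>\<^sup>2) = c\<^sup>2 / sqrt w"
proof -
  have square: "\<bar>psi c w x\<bar>\<^sup>2 = c\<^sup>2 * exp (- (2 * sqrt w) * \<bar>x\<bar>)" for x
    by (simp add: psi_def power_mult_distrib power2_eq_square exp_add[symmetric] algebra_simps)
  have "((\<lambda>x. c\<^sup>2 * exp (- (2 * sqrt w) * \<bar>x\<bar>)) has_integral c\<^sup>2 * (2 / (2 * sqrt w))) UNIV"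
    using assms by (intro has_integral_mult_right has_integral_exp_minus_abs) simp
  then have "((\<lambda>x. \<bar>psi c w x\<bar>\<^sup>2) has_integral c\<^sup>2 / sqrt w) UNIV"
    using assms unfolding square by simp
  then show ?thesis
    by (rule integral_unique)
qed

lemma has_real_derivative_integral_psi_squared:
  assumes g: "(g has_real_derivative g') (at w)" and w: "w > 0"
  shows "((\<lambda>v. integral UNIV (\<lambda>x. \<bar>psi (g v) v x\<bar>\<^sup>2)) has_real_derivative
           2 * g w * g' / sqrt w - (g w)\<^sup>2 / (2 * w * sqrt w)) (at w)"
proof -
  have "((\<lambda>v. (g v)\<^sup>2) has_real_derivative 2 * g w * g') (at w)"
    using DERIV_power[OF g, of 2] by (simp add: mult_ac)
  then have "((\<lambda>v. (g v)\<^sup>2 / sqrt v) has_real_derivative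
      (2 * g w * g' * sqrt w - (g w)\<^sup>2 * (inverse (sqrt w) / 2)) / (sqrt w * sqrt w)) (at w)"
    using w by (intro DERIV_divide DERIV_real_sqrt) auto
  moreover have "(2 * g w * g' * sqrt w - (g w)\<^sup>2 * (inverse (sqrt w) / 2)) / (sqrt w * sqrt w)
      = 2 * g w * g' / sqrt w - (g w)\<^sup>2 / (2 * w * sqrt w)"
    using w by (simp add: field_simps)
  ultimately have quotient: "((\<lambda>v. (g v)\<^sup>2 / sqrt v) has_real_derivative
      2 * g w * g' / sqrt w - (g w)\<^sup>2 / (2 * w * sqrt w)) (at w)"
    by simp
  have "(g v)\<^sup>2 / sqrt v = integral UNIV (\<lambda>x. \<bar>psi (g v) v x\<bar>\<^sup>2)" if "v \<in> {0<..}" for v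
    using that by (intro integral_psi_squared[symmetric]) simp
  with w show ?thesis
    by (intro has_field_derivative_transform_within_open[OF quotient, of "{0<..}"]) auto
qed

lemma inj_on_if_deriv_nonzero:
  fixes f :: "real \<Rightarrow> real"
  assumes deriv: "\<And>x. x \<in> {a<..<b} \<Longrightarrow> (f has_real_derivative f' x) (at x)"
    and nonzero: "\<And>x. x \<in> {a<..<b} \<Longrightarrow> f' x \<noteq> 0"
  shows "inj_on f {a<..<b}"
proof -
  have False if "x \<in> {a<..<b}" "y \<in> {a<..<b}" "x < y" "f x = f y" for x y
  proof -
    have "continuous_on {x..y} f"
      using that by (intro continuous_at_imp_continuous_on ballI DERIV_isCont[OF deriv]) auto
    moreover have "f differentiable (at t)" if "x < t" "t < y" for t
      using deriv[of t] \<open>x \<in> _\<close> \<open>y \<in> _\<close> that by (auto simp: real_differentiable_def)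
    ultimately obtain z where "x < z" "z < y" "(f has_real_derivative 0) (at z)"
      using Rolle[OF \<open>x < y\<close> \<open>f x = f y\<close>] by blast
    moreover from this have "z \<in> {a<..<b}"
      using that by auto
    ultimately show False
      using DERIV_unique deriv nonzero by metis
  qed
  then show ?thesis
    by (metis inj_onI linorder_neqE_linordered_idom)
qed

lemma has_real_derivative_the_inv_into:
  fixes f :: "real \<Rightarrow> real"
  assumes "open S" "c \<in> S" "inj_on f S" "continuous_on S f"
    and "(f has_real_derivative D) (at c)" "D \<noteq> 0"
  shows "(the_inv_into S f has_real_derivative inverse D) (at (f c))"
  unfolding has_field_derivative_def
proof (rule has_derivative_inverse_strong[of S c f])
  show "(f has_derivative (*) D) (at c)"
    using assms(5) by (simp add: has_field_derivative_def)
  show "(*) D \<circ> (*) (inverse D) = id"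
    using \<open>D \<noteq> 0\<close> by (auto simp: fun_eq_iff)
qed (use assms the_inv_into_f_f in auto)

lemma local_inverse_function_real:
  fixes f f' :: "real \<Rightarrow> real"
  assumes deriv: "\<And>x. (f has_real_derivative f' x) (at x)"
    and "isCont f' c" "f' c \<noteq> 0"
  shows "\<exists>\<epsilon>>0. inj_on f {c - \<epsilon><..<c + \<epsilon>} \<and>
           (the_inv_into {c - \<epsilon><..<c + \<epsilon>} f has_real_derivative inverse (f' c)) (at (f c))"
proof -
  obtain \<epsilon> where "\<epsilon> > 0" and nonzero: "\<And>y. dist c y < \<epsilon> \<Longrightarrow> f' y \<noteq> 0"
    using continuous_at_avoid[of c f' 0] assms by auto
  have inj: "inj_on f {c - \<epsilon><..<c + \<epsilon>}"
    using deriv nonzero by (intro inj_on_if_deriv_nonzero) (auto simp: dist_real_def)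
  have "continuous_on {c - \<epsilon><..<c + \<epsilon>} f"
    using deriv by (intro continuous_at_imp_continuous_on) (auto intro: DERIV_isCont)
  with inj \<open>\<epsilon> > 0\<close> assms show ?thesis
    by (intro exI[of _ \<epsilon>] conjI has_real_derivative_the_inv_into) auto
qed

lemma omega_has_real_derivative:
  assumes "\<And>x. (a has_real_derivative a' x) (at x)"
  shows "(omega a has_real_derivative a (z\<^sup>2) * a' (z\<^sup>2) * z) (at z)"
proof -
  have "((\<lambda>z. a (z\<^sup>2)) has_real_derivative a' (z\<^sup>2) * (2 * z)) (at z)"
    by (rule DERIV_chain2[OF assms]) (auto intro!: derivative_eq_intros)
  then have "((\<lambda>z. (a (z\<^sup>2))\<^sup>2 / 4) has_real_derivative 2 * a (z\<^sup>2) * (a' (z\<^sup>2) * (2 * z)) / 4) (at z)"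
    by (auto intro!: derivative_eq_intros)
  then show ?thesis
    unfolding omega_def[abs_def] by (simp add: algebra_simps)
qed

lemma omega_local_inverse:
  assumes deriv: "\<And>x. (a has_real_derivative a' x) (at x)"
    and cont: "continuous_on UNIV a'"
    and nonzero: "a (C\<^sup>2) \<noteq> 0" "a' (C\<^sup>2) \<noteq> 0" "C \<noteq> 0"
  shows "\<exists>\<epsilon>>0. inj_on (omega a) {C - \<epsilon><..<C + \<epsilon>} \<and>
           (the_inv_into {C - \<epsilon><..<C + \<epsilon>} (omega a) has_real_derivative
              inverse (a (C\<^sup>2) * a' (C\<^sup>2) * C)) (at (omega a C))"
proof -
  have "isCont a x" "isCont a' x" for x
    using DERIV_isCont[OF deriv] cont by (auto simp: continuous_on_eq_continuous_at)
  then have "isCont (\<lambda>z. a (z\<^sup>2) * a' (z\<^sup>2) * z) C"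
    by (intro continuous_intros continuous_at_compose[of C "\<lambda>z. z\<^sup>2", unfolded o_def])
  with nonzero show ?thesis
    by (intro local_inverse_function_real omega_has_real_derivative[OF deriv]) auto
qed

lemma mass_slope_neg:
  fixes A A' C :: real
  assumes "A > 0" "C \<noteq> 0" "A' < 0 \<or> A' > A / C\<^sup>2"
  shows "4 * (A - C\<^sup>2 * A') / (A ^ 3 * A') < 0"
  using assms(3)
proof
  assume "A' < 0"
  moreover have "C\<^sup>2 > 0" "A ^ 3 > 0"
    using assms by simp_all
  ultimately have "C\<^sup>2 * A' < 0" "A ^ 3 * A' < 0"
    by (simp_all add: mult_pos_neg)
  with \<open>A > 0\<close> show ?thesis
    by (simp add: divide_pos_neg)
next
  assume A': "A' > A / C\<^sup>2"
  have "C\<^sup>2 > 0"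
    using assms by simp
  with A' have "A < A' * C\<^sup>2"
    by (simp add: pos_divide_less_eq)
  moreover have "A' > 0"
    using divide_pos_pos[OF \<open>A > 0\<close> \<open>C\<^sup>2 > 0\<close>] A' by linarith
  ultimately show ?thesis
    using \<open>A > 0\<close> by (simp add: divide_neg_pos algebra_simps)
qed

lemma mass_slope_pos:
  fixes A A' C :: real
  assumes "A > 0" "C \<noteq> 0" "0 < A' \<and> A' < A / C\<^sup>2"
  shows "4 * (A - C\<^sup>2 * A') / (A ^ 3 * A') > 0"
proof -
  have "C\<^sup>2 > 0"
    using assms by simp
  with assms have "A - C\<^sup>2 * A' > 0"
    by (simp add: field_simps)
  with assms show ?thesis
    by simp
qed

theorem lemma3p3:
  fixes a a' :: "real \<Rightarrow> real" and C :: real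
  assumes deriv: "\<And>x. (a has_real_derivative a' x) (at x)"
    and cont: "continuous_on UNIV a'"
    and Cpos: "C > 0"
    and apos: "a (C\<^sup>2) > 0"
    and a'nz: "a' (C\<^sup>2) \<noteq> 0"
  shows "\<exists>\<epsilon>>0. \<exists>D.
           inj_on (omega a) {C - \<epsilon><..<C + \<epsilon>} \<and>
           ((\<lambda>w. integral UNIV (\<lambda>x. \<bar>psi (the_inv_into {C - \<epsilon><..<C + \<epsilon>} (omega a) w) w x\<bar>\<^sup>2))
              has_real_derivative D) (at (omega a C)) \<and>
           ((a' (C\<^sup>2) < 0 \<or> a' (C\<^sup>2) > a (C\<^sup>2) / C\<^sup>2) \<longrightarrow> D < 0) \<and>
           ((0 < a' (C\<^sup>2) \<and> a' (C\<^sup>2) < a (C\<^sup>2) / C\<^sup>2) \<longrightarrow> D > 0)"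
proof -
  obtain \<epsilon> where "\<epsilon> > 0" and inj: "inj_on (omega a) {C - \<epsilon><..<C + \<epsilon>}"
    and inv: "(the_inv_into {C - \<epsilon><..<C + \<epsilon>} (omega a) has_real_derivative
                inverse (a (C\<^sup>2) * a' (C\<^sup>2) * C)) (at (omega a C))"
    using omega_local_inverse[OF deriv cont _ a'nz] apos Cpos by force
  have inv_C: "the_inv_into {C - \<epsilon><..<C + \<epsilon>} (omega a) (omega a C) = C"
    using inj \<open>\<epsilon> > 0\<close> by (simp add: the_inv_into_f_f)
  have omega_C: "omega a C = (a (C\<^sup>2) / 2)\<^sup>2"
    by (simp add: omega_def power_divide)
  then have sqrt_omega_C: "sqrt (omega a C) = a (C\<^sup>2) / 2" and "omega a C > 0"
    using apos by simp_all
  define D where "D = 4 * (a (C\<^sup>2) - C\<^sup>2 * a' (C\<^sup>2)) / (a (C\<^sup>2) ^ 3 * a' (C\<^sup>2))"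
  have "2 * C * inverse (a (C\<^sup>2) * a' (C\<^sup>2) * C) / sqrt (omega a C)
      - C\<^sup>2 / (2 * omega a C * sqrt (omega a C)) = D"
    unfolding sqrt_omega_C unfolding omega_C D_def using Cpos apos a'nz
    by (simp add: field_simps) algebra
  with has_real_derivative_integral_psi_squared[OF inv \<open>omega a C > 0\<close>]
  have "((\<lambda>w. integral UNIV (\<lambda>x. \<bar>psi (the_inv_into {C - \<epsilon><..<C + \<epsilon>} (omega a) w) w x\<bar>\<^sup>2))
      has_real_derivative D) (at (omega a C))"
    unfolding inv_C by simp
  moreover have "D < 0" if "a' (C\<^sup>2) < 0 \<or> a' (C\<^sup>2) > a (C\<^sup>2) / C\<^sup>2"
    unfolding D_def using apos Cpos that by (intro mass_slope_neg) auto
  moreover have "D > 0" if "0 < a' (C\<^sup>2) \<and> a' (C\<^sup>2) < a (C\<^sup>2) / C\<^sup>2"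
    unfolding D_def using apos Cpos that by (intro mass_slope_pos) auto
  ultimately show ?thesis
    using \<open>\<epsilon> > 0\<close> inj by blast
qed

end
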